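(* Let $X\subset A^+$ be a finite set which is the minimal generating set of the submonoid $X^*$. For every trim automaton $\mathcal{B}=(Q,i,i)$ recognizing $X^*$ with multiplicities, there is a sharp reduction from the flower automaton of $X$ onto $\mathcal{B}$.
   Context: Automata $(Q,i,t)$: finite state set, initial state $i$, terminal state $t$, edges $p\xrightarrow{a}q$ with $a\in A$ (a set of triples). The behaviour $|\mathcal{A}|$ assigns to $w\in A^*$ the number of paths from $i$ to $t$ labeled $w$; $\mathcal{A}$ recognizes $X^*$ with multiplicities if $|\mathcal{A}|=\underline{X}^*$, i.e. for every $w$ the number of such paths equals the number of factorizations of $w$ into words of $X$. An automaton is trim if every state lies on some path from the initial state to the terminal state. The flower automaton of $X$ has states $\{(u,v)\in A^+\times A^+\mid uv\in X\}\cup\{\omega\}$, $\omega=(1,1)$ initial and terminal, and edges $(u,av)\xrightarrow{a}(ua,v)$ for $uav\in X$, $u,v\ne1$; $\omega\xrightarrow{a}(a,v)$ for $av\in X$, $v\ne1$; $(u,a)\xrightarrow{a}\omega$ for $ua\in X$, $u\neq 1$; $\omega\xrightarrow{a}\omega$ for $a\in X$. A reduction from $(P,i,t)$ onto $(Q,j,u)$ is a surjective map $\rho:P\to Q$ with $\rho(i)=j,\rho(t)=u$ such that for all $q,q'\in Q$, $w\in A^*$, there is a path $q\xrightarrow{w}q'$ in the second automaton iff there is a path $p\xrightarrow{w}p'$ in the first with $\rho(p)=q,\rho(p')=q'$. It is sharp if $\rho^{-1}(j)=\{i\}$ and $\rho^{-1}(u)=\{t\}$. *)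

theory Defs
  imports Main
begin

definition lpath :: "('q \<times> 'a \<times> 'q) set \<Rightarrow> 'q list \<Rightarrow> 'a list \<Rightarrow> bool" where
  "lpath E qs w \<longleftrightarrow> length qs = Suc (length w) \<and>
     (\<forall>k < length w. (qs ! k, w ! k, qs ! Suc k) \<in> E)"

definition paths :: "('q \<times> 'a \<times> 'q) set \<Rightarrow> 'q \<Rightarrow> 'a list \<Rightarrow> 'q \<Rightarrow> 'q list set" where
  "paths E p w q = {qs. lpath E qs w \<and> hd qs = p \<and> last qs = q}"

definition has_path :: "('q \<times> 'a \<times> 'q) set \<Rightarrow> 'q \<Rightarrow> 'a list \<Rightarrow> 'q \<Rightarrow> bool" where
  "has_path E p w q \<longleftrightarrow> paths E p w q \<noteq> {}"

definition automaton :: "'q set \<Rightarrow> ('q \<times> 'a \<times> 'q) set \<Rightarrow> 'q \<Rightarrow> 'q \<Rightarrow> bool" where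
  "automaton Q E i t \<longleftrightarrow> finite Q \<and> i \<in> Q \<and> t \<in> Q \<and> E \<subseteq> Q \<times> UNIV \<times> Q"

definition behaviour :: "('q \<times> 'a \<times> 'q) set \<Rightarrow> 'q \<Rightarrow> 'q \<Rightarrow> 'a list \<Rightarrow> nat" where
  "behaviour E i t w = card (paths E i w t)"

definition factorizations :: "'a list set \<Rightarrow> 'a list \<Rightarrow> 'a list list set" where
  "factorizations X w = {xs. set xs \<subseteq> X \<and> concat xs = w}"

definition recognizes_star_mult ::
  "'q set \<Rightarrow> ('q \<times> 'a \<times> 'q) set \<Rightarrow> 'q \<Rightarrow> 'q \<Rightarrow> 'a list set \<Rightarrow> bool" where
  "recognizes_star_mult Q E i t X \<longleftrightarrow>
     (\<forall>w. behaviour E i t w = card (factorizations X w))"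

definition trim :: "'q set \<Rightarrow> ('q \<times> 'a \<times> 'q) set \<Rightarrow> 'q \<Rightarrow> 'q \<Rightarrow> bool" where
  "trim Q E i t \<longleftrightarrow> (\<forall>q\<in>Q. \<exists>u v. has_path E i u q \<and> has_path E q v t)"

definition star :: "'a list set \<Rightarrow> 'a list set" where
  "star X = {concat xs | xs. set xs \<subseteq> X}"

definition minimal_generating_set :: "'a list set \<Rightarrow> bool" where
  "minimal_generating_set X \<longleftrightarrow>
     (let M' = star X - {[]} in X = M' - {u @ v | u v. u \<in> M' \<and> v \<in> M'})"

definition flower_states :: "'a list set \<Rightarrow> ('a list \<times> 'a list) set" where
  "flower_states X = {(u, v). u \<noteq> [] \<and> v \<noteq> [] \<and> u @ v \<in> X} \<union> {([], [])}"

definition flower_edges ::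
  "'a list set \<Rightarrow> (('a list \<times> 'a list) \<times> 'a \<times> ('a list \<times> 'a list)) set" where
  "flower_edges X =
     {((u, a # v), a, (u @ [a], v)) | u a v. u @ a # v \<in> X \<and> u \<noteq> [] \<and> v \<noteq> []}
   \<union> {(([], []), a, ([a], v)) | a v. a # v \<in> X \<and> v \<noteq> []}
   \<union> {((u, [a]), a, ([], [])) | u a. u @ [a] \<in> X \<and> u \<noteq> []}
   \<union> {(([], []), a, ([], [])) | a. [a] \<in> X}"

definition reduction ::
  "('p \<Rightarrow> 'q) \<Rightarrow> 'p set \<Rightarrow> ('p \<times> 'a \<times> 'p) set \<Rightarrow> 'p \<Rightarrow> 'p \<Rightarrow>
   'q set \<Rightarrow> ('q \<times> 'a \<times> 'q) set \<Rightarrow> 'q \<Rightarrow> 'q \<Rightarrow> bool" where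
  "reduction \<rho> P E i t Q F j u \<longleftrightarrow>
     \<rho> ` P = Q \<and> \<rho> i = j \<and> \<rho> t = u \<and>
     (\<forall>q\<in>Q. \<forall>q'\<in>Q. \<forall>w. has_path F q w q' \<longleftrightarrow>
        (\<exists>p\<in>P. \<exists>p'\<in>P. has_path E p w p' \<and> \<rho> p = q \<and> \<rho> p' = q'))"

definition sharp_reduction ::
  "('p \<Rightarrow> 'q) \<Rightarrow> 'p set \<Rightarrow> ('p \<times> 'a \<times> 'p) set \<Rightarrow> 'p \<Rightarrow> 'p \<Rightarrow>
   'q set \<Rightarrow> ('q \<times> 'a \<times> 'q) set \<Rightarrow> 'q \<Rightarrow> 'q \<Rightarrow> bool" where
  "sharp_reduction \<rho> P E i t Q F j u \<longleftrightarrow>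
     reduction \<rho> P E i t Q F j u \<and>
     {p\<in>P. \<rho> p = j} = {i} \<and> {p\<in>P. \<rho> p = u} = {t}"

end

theory Submission
  imports Defs
begin

(*
  Cutting a loop at i after its first return to i, and a factorization after its first
  factor, gives two recursions over the prefixes w[..k] of w:
    #loops(w)          = sum_k #first_returns(w[..k]) * #loops(w[k..])
    #factorizations(w) = sum_k [w[..k] in X] * #factorizations(w[k..]).
  Recognition with multiplicities says #loops = #factorizations, so induction on the length
  gives #first_returns(x) = [x in X]: each x in X labels exactly one first-return path pi_x,
  and no other nonempty word labels one.  Sending the flower state (u, v) to the |u|-th
  state of pi_(uv) maps flower edges to edges, sends only ([], []) to i, and lifts every
  loop at i by cutting it into first returns.  Trimness extends any path of the automaton
  to a loop at i, whose lift contains a lift of the path.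
*)

section \<open>Paths\<close>

lemma mem_paths_iff:
  "qs \<in> paths E p w q \<longleftrightarrow> length qs = Suc (length w) \<and>
     (\<forall>k < length w. (qs ! k, w ! k, qs ! Suc k) \<in> E) \<and> qs ! 0 = p \<and> qs ! length w = q"
proof -
  have "hd qs = qs ! 0 \<and> last qs = qs ! length w" if "length qs = Suc (length w)"
  proof -
    have "qs \<noteq> []" using that by auto
    then show ?thesis using that by (simp add: hd_conv_nth last_conv_nth)
  qed
  then show ?thesis unfolding paths_def lpath_def by auto
qed

lemma paths_length: "qs \<in> paths E p w q \<Longrightarrow> length qs = Suc (length w)"
  by (simp add: mem_paths_iff)

lemma paths_nth_0: "qs \<in> paths E p w q \<Longrightarrow> qs ! 0 = p"
  by (simp add: mem_paths_iff)

lemma paths_nth_length: "qs \<in> paths E p w q \<Longrightarrow> qs ! length w = q"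
  by (simp add: mem_paths_iff)

lemma paths_Nil: "paths E p [] p = {[p]}"
  by (auto simp: mem_paths_iff length_Suc_conv)

lemma paths_append:
  assumes a: "a \<in> paths E p u q" and b: "b \<in> paths E q v r"
  shows "a @ tl b \<in> paths E p (u @ v) r"
proof -
  have la: "length a = Suc (length u)" and lb: "length b = Suc (length v)"
    using a b by (simp_all add: paths_length)
  have right: "(a @ tl b) ! k = b ! (k - length u)" if "length u \<le> k" "k \<le> length u + length v" for k
  proof (cases "k = length u")
    case True
    then show ?thesis using a b la by (simp add: nth_append mem_paths_iff)
  next
    case False
    then show ?thesis using that la lb by (simp add: nth_append nth_tl Suc_diff_Suc)
  qed
  have left: "(a @ tl b) ! k = a ! k" if "k \<le> length u" for k
    using that la by (simp add: nth_append)
  have edges: "((a @ tl b) ! k, (u @ v) ! k, (a @ tl b) ! Suc k) \<in> E" if "k < length (u @ v)" for k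
  proof (cases "k < length u")
    case True
    then show ?thesis using a left[of k] left[of "Suc k"] by (simp add: nth_append mem_paths_iff)
  next
    case False
    then show ?thesis
      using b that right[of k] right[of "Suc k"] by (simp add: nth_append mem_paths_iff Suc_diff_le)
  qed
  show ?thesis
    using a b la lb edges left[of 0] right[of "length u + length v"] by (simp add: mem_paths_iff)
qed

lemma paths_take:
  assumes qs: "qs \<in> paths E p w q" and k: "k \<le> length w"
  shows "take (Suc k) qs \<in> paths E p (take k w) (qs ! k)"
proof -
  have "length qs = Suc (length w)" "qs ! 0 = p"
    and "\<And>j. j < length w \<Longrightarrow> (qs ! j, w ! j, qs ! Suc j) \<in> E"
    using qs by (simp_all add: mem_paths_iff)
  then show ?thesis using k by (simp add: mem_paths_iff min_def)
qed

lemma paths_drop: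
  assumes qs: "qs \<in> paths E p w q" and k: "k \<le> length w"
  shows "drop k qs \<in> paths E (qs ! k) (drop k w) q"
proof -
  have "length qs = Suc (length w)" "qs ! length w = q"
    and "\<And>j. j < length w \<Longrightarrow> (qs ! j, w ! j, qs ! Suc j) \<in> E"
    using qs by (simp_all add: mem_paths_iff)
  then show ?thesis using k by (simp add: mem_paths_iff)
qed

lemma paths_infix:
  assumes qs: "qs \<in> paths E p (u @ w @ v) q"
  shows "take (Suc (length w)) (drop (length u) qs)
           \<in> paths E (qs ! length u) w (qs ! (length u + length w))"
proof -
  have "drop (length u) qs \<in> paths E (qs ! length u) (w @ v) q"
    using paths_drop[OF qs, of "length u"] by simp
  from paths_take[OF this, of "length w"] show ?thesis
    using paths_length[OF qs] by simp
qed

lemma paths_map: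
  assumes "qs \<in> paths E p w q" "\<And>s a s'. (s, a, s') \<in> E \<Longrightarrow> (f s, a, f s') \<in> F"
  shows "map f qs \<in> paths F (f p) w (f q)"
  using assms by (auto simp: mem_paths_iff)

lemma paths_subset_states:
  assumes qs: "qs \<in> paths E p w q" and E: "E \<subseteq> S \<times> UNIV \<times> S" and p: "p \<in> S"
  shows "set qs \<subseteq> S"
proof -
  have "qs ! k \<in> S" if "k \<le> length w" for k
    using that
  proof (induction k)
    case 0
    then show ?case using qs p by (simp add: paths_nth_0)
  next
    case (Suc k)
    then have "(qs ! k, w ! k, qs ! Suc k) \<in> E" using qs by (simp add: mem_paths_iff)
    then show ?case using E by (auto simp: mem_Times_iff)
  qed
  moreover have "length qs = Suc (length w)" using qs by (rule paths_length)
  ultimately show ?thesis by (metis in_set_conv_nth less_Suc_eq_le subsetI)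
qed

lemma finite_paths:
  assumes "finite S" "E \<subseteq> S \<times> UNIV \<times> S" "p \<in> S"
  shows "finite (paths E p w q)"
proof (rule finite_subset)
  show "paths E p w q \<subseteq> {qs. set qs \<subseteq> S \<and> length qs = Suc (length w)}"
    using paths_subset_states[OF _ assms(2,3)] paths_length by fast
  show "finite {qs. set qs \<subseteq> S \<and> length qs = Suc (length w)}"
    using finite_lists_length_eq[OF assms(1)] by simp
qed

section \<open>First factors and first returns\<close>

lemma length_le_length_concat: "set xs \<subseteq> X \<Longrightarrow> [] \<notin> X \<Longrightarrow> length xs \<le> length (concat xs)"
proof (induction xs)
  case (Cons x xs)
  then have "x \<noteq> []" by auto
  then show ?case using Cons by (cases x) auto
qed simp

lemma finite_factorizations:
  assumes "finite X" "[] \<notin> X"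
  shows "finite (factorizations X w)"
proof (rule finite_subset)
  show "factorizations X w \<subseteq> {xs. set xs \<subseteq> X \<and> length xs \<le> length w}"
    using length_le_length_concat[OF _ assms(2)] by (auto simp: factorizations_def)
  show "finite {xs. set xs \<subseteq> X \<and> length xs \<le> length w}"
    using finite_lists_length_le[OF assms(1)] by simp
qed

lemma card_factorizations_first_factor:
  assumes X: "finite X" "[] \<notin> X" and w: "w \<noteq> []"
  shows "card (factorizations X w) =
    (\<Sum>k = 1..length w. of_bool (take k w \<in> X) * card (factorizations X (drop k w)))"
proof -
  let ?K = "{k \<in> {1..length w}. take k w \<in> X}"
  let ?D = "SIGMA k:?K. factorizations X (drop k w)"
  have "factorizations X w = (\<lambda>(k, ys). take k w # ys) ` ?D"
  proof
    show "factorizations X w \<subseteq> (\<lambda>(k, ys). take k w # ys) ` ?D"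
    proof
      fix xs assume xs: "xs \<in> factorizations X w"
      then obtain x ys where xs_eq: "xs = x # ys"
        using w by (cases xs) (auto simp: factorizations_def)
      have "x \<in> X" "x \<noteq> []" "set ys \<subseteq> X" "w = x @ concat ys"
        using xs xs_eq X(2) by (auto simp: factorizations_def)
      then have "(length x, ys) \<in> ?D" "xs = take (length x) w # ys"
        using xs_eq by (auto simp: factorizations_def Suc_le_eq)
      then show "xs \<in> (\<lambda>(k, ys). take k w # ys) ` ?D" by force
    qed
    show "(\<lambda>(k, ys). take k w # ys) ` ?D \<subseteq> factorizations X w"
      by (auto simp: factorizations_def)
  qed
  moreover have "inj_on (\<lambda>(k, ys). take k w # ys) ?D"
    by (rule inj_on_inverseI[where g = "\<lambda>xs. (length (hd xs), tl xs)"]) (auto simp: min_def)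
  ultimately have "card (factorizations X w) = card ?D" by (simp add: card_image)
  also have "\<dots> = (\<Sum>k\<in>?K. card (factorizations X (drop k w)))"
    using finite_factorizations[OF X] by (intro card_SigmaI) auto
  also have "\<dots> = (\<Sum>k = 1..length w. if take k w \<in> X then card (factorizations X (drop k w)) else 0)"
    by (rule sum.inter_filter) simp
  also have "\<dots> = (\<Sum>k = 1..length w. of_bool (take k w \<in> X) * card (factorizations X (drop k w)))"
    by (rule sum.cong) auto
  finally show ?thesis .
qed

lemma first_factor_expansion_unique:
  fixes f g P :: "'a list \<Rightarrow> 'b::comm_semiring_1_cancel"
  assumes expansion: "\<And>w. w \<noteq> [] \<Longrightarrow>
      (\<Sum>k = 1..length w. f (take k w) * P (drop k w)) = (\<Sum>k = 1..length w. g (take k w) * P (drop k w))"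
    and "P [] = 1" and "w \<noteq> []"
  shows "f w = g w"
  using \<open>w \<noteq> []\<close>
proof (induction "length w" arbitrary: w rule: less_induct)
  case less
  then obtain m where m: "length w = Suc m" by (cases w) auto
  have "f (take k w) = g (take k w)" if "k \<in> {1..m}" for k
    by (rule less.hyps) (use that m in auto)
  then have "(\<Sum>k = 1..m. f (take k w) * P (drop k w)) = (\<Sum>k = 1..m. g (take k w) * P (drop k w))"
    by simp
  then show "f w = g w"
    using expansion[OF less.prems] m \<open>P [] = 1\<close> by simp
qed

definition first_returns :: "('q \<times> 'a \<times> 'q) set \<Rightarrow> 'q \<Rightarrow> 'a list \<Rightarrow> 'q list set" where
  "first_returns E i w = {qs \<in> paths E i w i. \<forall>k. 0 < k \<longrightarrow> k < length w \<longrightarrow> qs ! k \<noteq> i}"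

lemma first_returns_Nil: "first_returns E i [] = {[i]}"
  by (simp add: first_returns_def paths_Nil)

definition first_return_time :: "'q \<Rightarrow> 'q list \<Rightarrow> nat" where
  "first_return_time i qs = (LEAST k. 0 < k \<and> qs ! k = i)"

lemma first_return_split:
  assumes qs: "qs \<in> paths E i w i" and w: "w \<noteq> []"
  defines "k \<equiv> first_return_time i qs"
  shows "0 < k" "k \<le> length w" "take (Suc k) qs \<in> first_returns E i (take k w)"
    "drop k qs \<in> paths E i (drop k w) i"
proof -
  have returns: "0 < length w \<and> qs ! length w = i" using qs w by (simp add: mem_paths_iff)
  have k: "0 < k" "k \<le> length w" "qs ! k = i"
    using LeastI[where P = "\<lambda>k. 0 < k \<and> qs ! k = i", OF returns]
      Least_le[where P = "\<lambda>k. 0 < k \<and> qs ! k = i", OF returns]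
    unfolding k_def first_return_time_def by auto
  then show "0 < k" "k \<le> length w" by simp_all
  have "qs ! j \<noteq> i" if "0 < j" "j < k" for j
    using not_less_Least[of j "\<lambda>k. 0 < k \<and> qs ! k = i"] that
    unfolding k_def first_return_time_def by blast
  then show "take (Suc k) qs \<in> first_returns E i (take k w)"
    using paths_take[OF qs k(2)] k by (simp add: first_returns_def min_def)
  show "drop k qs \<in> paths E i (drop k w) i"
    using paths_drop[OF qs k(2)] k by simp
qed

lemma first_return_append:
  assumes a: "a \<in> first_returns E i u" and u: "u \<noteq> []" and b: "b \<in> paths E i v i"
  shows "first_return_time i (a @ tl b) = length u"
    and "take (Suc (length u)) (a @ tl b) = a" and "drop (length u) (a @ tl b) = b"
proof -
  have a_path: "a \<in> paths E i u i" using a by (simp add: first_returns_def)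
  have la: "length a = Suc (length u)" using a_path by (rule paths_length)
  have prefix: "(a @ tl b) ! j = a ! j" if "j \<le> length u" for j
    using that la by (simp add: nth_append)
  have returns: "(a @ tl b) ! length u = i"
    using prefix[of "length u"] paths_nth_length[OF a_path] by simp
  have no_return: "(a @ tl b) ! j \<noteq> i" if "0 < j" "j < length u" for j
    using that a prefix[of j] by (simp add: first_returns_def)
  show "first_return_time i (a @ tl b) = length u"
    unfolding first_return_time_def
  proof (rule Least_equality)
    show "0 < length u \<and> (a @ tl b) ! length u = i" using u returns by simp
    show "length u \<le> j" if "0 < j \<and> (a @ tl b) ! j = i" for j
      using that no_return[of j] not_le by blast
  qed
  show "take (Suc (length u)) (a @ tl b) = a" using la by simp
  have "b = i # tl b"
    using b paths_nth_0[OF b] paths_length[OF b] by (cases b) auto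
  moreover have "drop (length u) a = [i]"
    using la paths_nth_length[OF a_path] Cons_nth_drop_Suc[of "length u" a] by simp
  ultimately show "drop (length u) (a @ tl b) = b" using la by simp
qed

lemma card_paths_first_return:
  assumes S: "finite S" "E \<subseteq> S \<times> UNIV \<times> S" "i \<in> S" and w: "w \<noteq> []"
  shows "card (paths E i w i) =
    (\<Sum>k = 1..length w. card (first_returns E i (take k w)) * card (paths E i (drop k w) i))"
proof -
  let ?D = "SIGMA k:{1..length w}. first_returns E i (take k w) \<times> paths E i (drop k w) i"
  let ?f = "\<lambda>(k, a, b). a @ tl b"
  have decompose: "paths E i w i \<subseteq> ?f ` ?D"
  proof
    fix qs assume qs: "qs \<in> paths E i w i"
    define k where "k = first_return_time i qs"
    have "(k, take (Suc k) qs, drop k qs) \<in> ?D"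
      using first_return_split[OF qs w] unfolding k_def by simp
    moreover have "qs = ?f (k, take (Suc k) qs, drop k qs)"
      by (simp add: tl_drop) (metis append_take_drop_id drop_Suc)
    ultimately show "qs \<in> ?f ` ?D" by (rule rev_image_eqI)
  qed
  have compose: "?f ` ?D \<subseteq> paths E i w i"
  proof clarify
    fix k a b
    assume "k \<in> {1..length w}" "a \<in> first_returns E i (take k w)" "b \<in> paths E i (drop k w) i"
    then have "a @ tl b \<in> paths E i (take k w @ drop k w) i"
      by (intro paths_append) (simp_all add: first_returns_def)
    then show "a @ tl b \<in> paths E i w i" by simp
  qed
  \<comment> \<open>the cut point is recovered as the first return time\<close>
  have inj: "inj_on ?f ?D"
  proof (rule inj_on_inverseI[where g = "\<lambda>qs. (first_return_time i qs,
      take (Suc (first_return_time i qs)) qs, drop (first_return_time i qs) qs)"])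
    fix x assume "x \<in> ?D"
    then obtain k a b where "x = (k, a, b)" "k \<in> {1..length w}"
      "a \<in> first_returns E i (take k w)" "b \<in> paths E i (drop k w) i" by auto
    then show "(first_return_time i (?f x), take (Suc (first_return_time i (?f x))) (?f x),
        drop (first_return_time i (?f x)) (?f x)) = x"
      using first_return_append[of a E i "take k w" b "drop k w"] w by simp
  qed
  have "card (paths E i w i) = card (?f ` ?D)"
    using subset_antisym[OF decompose compose] by (rule arg_cong)
  also have "\<dots> = card ?D" by (rule card_image[OF inj])
  also have "\<dots> = (\<Sum>k = 1..length w. card (first_returns E i (take k w) \<times> paths E i (drop k w) i))"
    using finite_paths[OF S] by (intro card_SigmaI) (auto simp: first_returns_def)
  finally show ?thesis by (simp add: card_cartesian_product)
qed

section \<open>The flower automaton\<close>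

definition flower_state :: "'a list \<Rightarrow> nat \<Rightarrow> 'a list \<times> 'a list" where
  "flower_state x j = (if j = 0 \<or> j = length x then ([], []) else (take j x, drop j x))"

definition flower_loop :: "'a list \<Rightarrow> ('a list \<times> 'a list) list" where
  "flower_loop x = map (flower_state x) [0..<Suc (length x)]"

lemma flower_edgeE:
  assumes "e \<in> flower_edges X"
  obtains x j where "x \<in> X" "j < length x" "e = (flower_state x j, x ! j, flower_state x (Suc j))"
  using assms unfolding flower_edges_def
proof (elim UnE CollectE exE conjE)
  fix u a v assume "e = ((u, a # v), a, u @ [a], v)" "u @ a # v \<in> X" "u \<noteq> []" "v \<noteq> []"
  then show thesis using that[of "u @ a # v" "length u"] by (simp add: flower_state_def)
next
  fix a v assume "e = (([], []), a, [a], v)" "a # v \<in> X" "v \<noteq> []"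
  then show thesis using that[of "a # v" 0] by (simp add: flower_state_def)
next
  fix u a assume "e = ((u, [a]), a, [], [])" "u @ [a] \<in> X" "u \<noteq> []"
  then show thesis using that[of "u @ [a]" "length u"] by (simp add: flower_state_def)
next
  fix a assume "e = (([], []), a, [], [])" "[a] \<in> X"
  then show thesis using that[of "[a]" 0] by (simp add: flower_state_def)
qed

lemma flower_step_in_edges:
  assumes x: "x \<in> X" and j: "j < length x"
  shows "(flower_state x j, x ! j, flower_state x (Suc j)) \<in> flower_edges X"
proof -
  have split: "take j x @ x ! j # drop (Suc j) x = x" using j by (simp add: id_take_nth_drop[symmetric])
  have drop: "drop j x = x ! j # drop (Suc j) x" using j by (simp add: Cons_nth_drop_Suc)
  have take: "take (Suc j) x = take j x @ [x ! j]" using j by (simp add: take_Suc_conv_app_nth)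
  show ?thesis
    using x j split drop take by (auto simp: flower_edges_def flower_state_def)
qed

lemma flower_loop_path:
  assumes "x \<in> X"
  shows "flower_loop x \<in> paths (flower_edges X) ([], []) x ([], [])"
  using assms flower_step_in_edges[of x X]
  by (auto simp: mem_paths_iff flower_loop_def flower_state_def simp del: upt_Suc)

lemma flower_statesE:
  assumes "p \<in> flower_states X"
  obtains "p = ([], [])"
  | x j where "x \<in> X" "0 < j" "j < length x" "p = flower_state x j"
proof (cases "p = ([], [])")
  case False
  then obtain u v where "p = (u, v)" "u \<noteq> []" "v \<noteq> []" "u @ v \<in> X"
    using assms by (auto simp: flower_states_def)
  then show thesis using that(2)[of "u @ v" "length u"] by (simp add: flower_state_def)
qed

lemma initial_in_flower_states: "([], []) \<in> flower_states X"
  by (simp add: flower_states_def)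

lemma flower_state_in_states:
  assumes "x \<in> X" "j \<le> length x"
  shows "flower_state x j \<in> flower_states X"
  using assms by (auto simp: flower_states_def flower_state_def)

lemma flower_edges_subset: "flower_edges X \<subseteq> flower_states X \<times> UNIV \<times> flower_states X"
proof
  fix e assume "e \<in> flower_edges X"
  then obtain x j where "x \<in> X" "j < length x" "e = (flower_state x j, x ! j, flower_state x (Suc j))"
    by (rule flower_edgeE)
  then show "e \<in> flower_states X \<times> UNIV \<times> flower_states X"
    using flower_state_in_states[of x X] by simp
qed

section \<open>Reduction of the flower automaton onto a trim recognizer\<close>

locale star_recognizer =
  fixes X :: "'a list set" and Q :: "'q set" and E :: "('q \<times> 'a \<times> 'q) set" and i :: 'q
  assumes finite_X: "finite X" and Nil_notin_X: "[] \<notin> X"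
    and automaton: "automaton Q E i i" and trim: "trim Q E i i"
    and recognizes: "recognizes_star_mult Q E i i X"
begin

lemma finite_Q: "finite Q" and i_in_Q: "i \<in> Q" and edges_subset: "E \<subseteq> Q \<times> UNIV \<times> Q"
  using automaton by (simp_all add: automaton_def)

lemma card_paths_eq_card_factorizations: "card (paths E i w i) = card (factorizations X w)"
  using recognizes by (simp add: recognizes_star_mult_def behaviour_def)

lemma card_first_returns: "w \<noteq> [] \<Longrightarrow> card (first_returns E i w) = of_bool (w \<in> X)"
proof (rule first_factor_expansion_unique[where P = "\<lambda>w. card (paths E i w i)"])
  fix w :: "'a list" assume w: "w \<noteq> []"
  have "(\<Sum>k = 1..length w. card (first_returns E i (take k w)) * card (paths E i (drop k w) i))
      = card (paths E i w i)"
    using card_paths_first_return[OF finite_Q edges_subset i_in_Q w] by simp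
  also have "\<dots> = card (factorizations X w)" by (rule card_paths_eq_card_factorizations)
  also have "\<dots> = (\<Sum>k = 1..length w. of_bool (take k w \<in> X) * card (paths E i (drop k w) i))"
    using card_factorizations_first_factor[OF finite_X Nil_notin_X w]
    by (simp add: card_paths_eq_card_factorizations)
  finally show "(\<Sum>k = 1..length w. card (first_returns E i (take k w)) * card (paths E i (drop k w) i))
      = (\<Sum>k = 1..length w. of_bool (take k w \<in> X) * card (paths E i (drop k w) i))" .
qed (simp add: paths_Nil)

definition first_return_path :: "'a list \<Rightarrow> 'q list" where
  "first_return_path w = (THE qs. qs \<in> first_returns E i w)"

lemma first_returns_singleton:
  assumes "w \<in> X \<or> w = []"
  shows "first_returns E i w = {first_return_path w}"
proof -
  have "card (first_returns E i w) = 1"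
  proof (cases "w = []")
    case True
    then show ?thesis by (simp add: first_returns_Nil)
  next
    case False
    then show ?thesis using assms card_first_returns by simp
  qed
  then obtain qs where "first_returns E i w = {qs}" by (rule card_1_singletonE)
  then show ?thesis by (simp add: first_return_path_def)
qed

lemma first_returns_empty:
  assumes "w \<noteq> []" "w \<notin> X"
  shows "first_returns E i w = {}"
proof -
  have "finite (first_returns E i w)"
    by (rule finite_subset[OF _ finite_paths[OF finite_Q edges_subset i_in_Q, of w i]])
      (simp add: first_returns_def)
  then show ?thesis using card_first_returns[of w] assms by simp
qed

lemma first_return_path_in_paths: "x \<in> X \<Longrightarrow> first_return_path x \<in> paths E i x i"
  using first_returns_singleton[of x] unfolding first_returns_def by blast

lemma first_return_path_avoids_initial:
  "x \<in> X \<Longrightarrow> 0 < j \<Longrightarrow> j < length x \<Longrightarrow> first_return_path x ! j \<noteq> i"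
  using first_returns_singleton[of x] by (auto simp: first_returns_def)

text \<open>The empty word has the first return path [i], so the formula sends ([], []) to i.\<close>

definition flower_map :: "'a list \<times> 'a list \<Rightarrow> 'q" where
  "flower_map = (\<lambda>(u, v). first_return_path (u @ v) ! length u)"

lemma first_return_path_Nil: "first_return_path [] = [i]"
  using first_returns_singleton[of "[]"] by (simp add: first_returns_Nil)

lemma flower_map_Nil: "flower_map ([], []) = i"
  by (simp add: flower_map_def first_return_path_Nil)

lemma flower_map_flower_state:
  assumes "x \<in> X" "j \<le> length x"
  shows "flower_map (flower_state x j) = first_return_path x ! j"
  using assms flower_map_Nil
    paths_nth_0[OF first_return_path_in_paths] paths_nth_length[OF first_return_path_in_paths]
  by (auto simp: flower_state_def flower_map_def min_def)

lemma map_flower_map_flower_loop: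
  assumes "x \<in> X"
  shows "map flower_map (flower_loop x) = first_return_path x"
proof (rule nth_equalityI)
  show "length (map flower_map (flower_loop x)) = length (first_return_path x)"
    using paths_length[OF first_return_path_in_paths[OF assms]] by (simp add: flower_loop_def)
  fix j assume "j < length (map flower_map (flower_loop x))"
  then have "j \<le> length x" by (simp add: flower_loop_def)
  then show "map flower_map (flower_loop x) ! j = first_return_path x ! j"
    using flower_map_flower_state[OF assms] by (simp add: flower_loop_def nth_append del: upt_Suc)
qed

lemma flower_map_edge:
  assumes "(p, a, p') \<in> flower_edges X"
  shows "(flower_map p, a, flower_map p') \<in> E"
proof -
  obtain x j where x: "x \<in> X" and j: "j < length x"
    and e: "(p, a, p') = (flower_state x j, x ! j, flower_state x (Suc j))"
    using assms by (rule flower_edgeE)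
  have "(first_return_path x ! j, x ! j, first_return_path x ! Suc j) \<in> E"
    using first_return_path_in_paths[OF x] j by (simp add: mem_paths_iff)
  then show ?thesis using e x j flower_map_flower_state[OF x] by simp
qed

lemma flower_map_in_Q:
  assumes "p \<in> flower_states X"
  shows "flower_map p \<in> Q"
  using assms
proof (cases rule: flower_statesE)
  case 1
  then show ?thesis by (simp add: flower_map_Nil i_in_Q)
next
  case (2 x j)
  then have "flower_map p \<in> set (first_return_path x)"
    using flower_map_flower_state paths_length[OF first_return_path_in_paths] by simp
  then show ?thesis
    using paths_subset_states[OF first_return_path_in_paths edges_subset i_in_Q] \<open>x \<in> X\<close> by blast
qed

lemma flower_map_eq_initial_iff:
  assumes "p \<in> flower_states X"
  shows "flower_map p = i \<longleftrightarrow> p = ([], [])"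
  using assms
proof (cases rule: flower_statesE)
  case 1
  then show ?thesis by (simp add: flower_map_Nil)
next
  case (2 x j)
  then have "flower_map p = first_return_path x ! j" using flower_map_flower_state by simp
  moreover have "p \<noteq> ([], [])" using 2 by (simp add: flower_state_def)
  ultimately show ?thesis using first_return_path_avoids_initial 2 by simp
qed

lemma lift_loop:
  assumes "qs \<in> paths E i w i"
  shows "\<exists>ps \<in> paths (flower_edges X) ([], []) w ([], []). map flower_map ps = qs"
  using assms
proof (induction "length w" arbitrary: w qs rule: less_induct)
  case less
  show ?case
  proof (cases "w = []")
    case True
    then show ?thesis using less.prems by (auto simp: paths_Nil flower_map_Nil)
  next
    case False
    define k where "k = first_return_time i qs"
    note split = first_return_split[OF less.prems False, folded k_def]
    let ?x = "take k w"
    have "?x \<noteq> []" using split(1) False by simp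
    then have x: "?x \<in> X" using split(3) first_returns_empty[of ?x] by auto
    have head: "take (Suc k) qs = map flower_map (flower_loop ?x)"
      using split(3) first_returns_singleton[of ?x] x map_flower_map_flower_loop by simp
    obtain ps where ps: "ps \<in> paths (flower_edges X) ([], []) (drop k w) ([], [])"
      and tail: "map flower_map ps = drop k qs"
      using less.hyps[OF _ split(4)] split(1) False by auto
    have "flower_loop ?x @ tl ps \<in> paths (flower_edges X) ([], []) (?x @ drop k w) ([], [])"
      using flower_loop_path[OF x] ps by (rule paths_append)
    moreover have "map flower_map (flower_loop ?x @ tl ps) = qs"
      using head tail by (simp add: map_tl) (metis append_take_drop_id drop_Suc tl_drop)
    ultimately show ?thesis by (metis append_take_drop_id)
  qed
qed

lemma lift_path:
  assumes q: "q \<in> Q" "q' \<in> Q" and path: "has_path E q w q'"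
  shows "\<exists>p \<in> flower_states X. \<exists>p' \<in> flower_states X.
           has_path (flower_edges X) p w p' \<and> flower_map p = q \<and> flower_map p' = q'"
proof -
  obtain b where b: "b \<in> paths E q w q'" using path by (auto simp: has_path_def)
  obtain u a where a: "a \<in> paths E i u q" using trim q(1) unfolding trim_def has_path_def by blast
  obtain v c where c: "c \<in> paths E q' v i" using trim q(2) unfolding trim_def has_path_def by blast
  have ab: "a @ tl b \<in> paths E i (u @ w) q'" using a b by (rule paths_append)
  have "(a @ tl b) @ tl c \<in> paths E i (u @ w @ v) i" using paths_append[OF ab c] by simp
  then obtain ps where ps: "ps \<in> paths (flower_edges X) ([], []) (u @ w @ v) ([], [])"
    and ps_map: "map flower_map ps = (a @ tl b) @ tl c"
    using lift_loop by blast
  define p p' where "p = ps ! length u" and "p' = ps ! (length u + length w)"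
  have "has_path (flower_edges X) p w p'"
    using paths_infix[OF ps] unfolding has_path_def p_def p'_def by blast
  moreover have "p \<in> flower_states X" "p' \<in> flower_states X"
  proof -
    have "set ps \<subseteq> flower_states X"
      using paths_subset_states[OF ps flower_edges_subset initial_in_flower_states] .
    moreover have "length u < length ps" "length u + length w < length ps"
      using paths_length[OF ps] by simp_all
    ultimately show "p \<in> flower_states X" "p' \<in> flower_states X"
      unfolding p_def p'_def by (meson nth_mem subsetD)+
  qed
  moreover have "flower_map p = q" "flower_map p' = q'"
  proof -
    have "length u < length a" "length u + length w < length (a @ tl b)" "length u + length w < length ps"
      using paths_length[OF a] paths_length[OF ab] paths_length[OF ps] by simp_all
    then have "flower_map p = a ! length u" "flower_map p' = (a @ tl b) ! (length u + length w)"
      using arg_cong[OF ps_map, of "\<lambda>qs. qs ! length u"]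
        arg_cong[OF ps_map, of "\<lambda>qs. qs ! (length u + length w)"]
        nth_append_left[of "length u + length w" "a @ tl b" "tl c"]
      by (simp_all add: p_def p'_def nth_append_left)
    then show "flower_map p = q" "flower_map p' = q'"
      using paths_nth_length[OF a] paths_nth_length[OF ab] by simp_all
  qed
  ultimately show ?thesis by blast
qed

lemma flower_map_image: "flower_map ` flower_states X = Q"
proof
  show "flower_map ` flower_states X \<subseteq> Q" using flower_map_in_Q by blast
  show "Q \<subseteq> flower_map ` flower_states X"
  proof
    fix q assume "q \<in> Q"
    moreover have "has_path E q [] q" by (simp add: has_path_def paths_Nil)
    ultimately show "q \<in> flower_map ` flower_states X" using lift_path by blast
  qed
qed

lemma has_path_iff_flower_path:
  assumes "q \<in> Q" "q' \<in> Q"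
  shows "has_path E q w q' \<longleftrightarrow> (\<exists>p \<in> flower_states X. \<exists>p' \<in> flower_states X.
           has_path (flower_edges X) p w p' \<and> flower_map p = q \<and> flower_map p' = q')"
proof
  show "has_path E q w q' \<Longrightarrow> \<exists>p \<in> flower_states X. \<exists>p' \<in> flower_states X.
      has_path (flower_edges X) p w p' \<and> flower_map p = q \<and> flower_map p' = q'"
    using assms by (rule lift_path)
  show "has_path E q w q'" if lifted: "\<exists>p \<in> flower_states X. \<exists>p' \<in> flower_states X.
      has_path (flower_edges X) p w p' \<and> flower_map p = q \<and> flower_map p' = q'"
  proof -
    obtain p p' ps where "ps \<in> paths (flower_edges X) p w p'" "flower_map p = q" "flower_map p' = q'"
      using lifted unfolding has_path_def by blast
    then have "map flower_map ps \<in> paths E q w q'"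
      using paths_map[of ps _ p w p' flower_map E] flower_map_edge by blast
    then show ?thesis unfolding has_path_def by blast
  qed
qed

theorem sharp_reduction_flower_map:
  "sharp_reduction flower_map (flower_states X) (flower_edges X) ([], []) ([], []) Q E i i"
proof -
  have "{p \<in> flower_states X. flower_map p = i} = {([], [])}"
    using flower_map_eq_initial_iff flower_map_Nil initial_in_flower_states by blast
  then show ?thesis
    using flower_map_image has_path_iff_flower_path flower_map_Nil
    unfolding sharp_reduction_def reduction_def by blast
qed

end

theorem mainTheorem3:
  fixes X :: "'a list set"
    and Q :: "'q set" and E :: "('q \<times> 'a \<times> 'q) set" and i :: 'q
  assumes "finite X"
    and "[] \<notin> X"
    and "minimal_generating_set X"
    and "automaton Q E i i"
    and "trim Q E i i"
    and "recognizes_star_mult Q E i i X"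
  shows "\<exists>\<rho> :: ('a list \<times> 'a list) \<Rightarrow> 'q.
           sharp_reduction \<rho> (flower_states X) (flower_edges X) ([], []) ([], [])
                           Q E i i"
proof -
  interpret star_recognizer X Q E i
    using assms(1,2,4-6) by unfold_locales
  show ?thesis using sharp_reduction_flower_map by blast
qed

end
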